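(* In the setting of the symmetric stochastic game with program $\mathcal P_{SS}(\lambda;\Pi)$, let $\underline z<\bar z$ with $-k_{SS}(-1;\Pi)<\underline z<\bar z<k_{SS}(+1;\Pi)$ and $Z=[\underline z,\bar z]$. Let $\epsilon_0>0$ and, for each $\lambda\in\{-1,+1\}$, let $(v^\lambda,x^\lambda)$ (together with some $(\alpha^\lambda_s)_s$) be feasible in $\mathcal P_{SS}(\lambda;\Pi)$ with $v^{-1}+\epsilon_0<z<v^{+1}-\epsilon_0$ for all $z\in Z$. Let $\kappa_0=\max\{\max_{\lambda,s,t,y}|x^\lambda_s(t,y)|,\ \max_{\lambda,z\in Z}|z-v^\lambda|\}$, let $n\in\mathbb N$ satisfy $\epsilon_0\frac{n-1}{2}-2\kappa_0|S|>0$, and let $\bar\delta<1$ be such that for all $\delta\ge\bar\delta$: $(n/2)^2(1-\delta)\le|S|$ and $1-\delta^{n-1}\ge(n-1)(1-\delta)/2$. Then for every $\lambda\in\{-1,+1\}$, every $z\in Z$ and every $\delta\ge\bar\delta$ there exists $w:H^n\to\mathbb R$ such that (1) for every $s\in S$, $z$ is an SSE payoff of the game $\Gamma^n(s,w;\delta)$, and (2) $\lambda w(h)<\lambda z$ for every $h\in H^n$.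
   Context: Setting: finite set of players $I$, finite state set $S$, common finite action set $B$, finite public signal set $Y$; $p(t,y\mid s,a)$ is the probability of next state $t$ and public signal $y$ given state $s$ and action profile $a$; $u(\alpha,s)$ is each player's payoff when all play $\alpha\in\Delta(B)$ at $s$. The program $\mathcal P_{SS}(\lambda;\Pi)$, $\lambda\in\{-1,+1\}$: maximize $\lambda v$ over $v\in\mathbb R$, $(\alpha_s)_s\in\Delta(B)^{|S|}$, $x=(x_s(t,y))$ subject to (a) $v=u(\alpha_s,s)+\sum_{(t,y)}x_s(t,y)p(t,y\mid s,\alpha_s)$ for all $s$; (b) $v\ge u_i((b,\alpha_{s,-i}),s)+\sum_{(t,y)}x_s(t,y)p(t,y\mid s,(b,\alpha_{s,-i}))$ for all $s,i$ and $b\in B$; (c) $\lambda\sum_{s\in T}x_s(\xi(s),\psi(s))\le0$ for all $T\subseteq S$, permutations $\xi$ of $T$, and $\psi:T\to Y$; its value is $k_{SS}(\lambda;\Pi)$. $H^n$ is the set of public histories $h^n=(s^1,y^1,s^2,y^2,\dots,s^{n-1},y^{n-1},s^n)$ of length $n$. $\Gamma^n(s,w;\delta)$ is the $(n-1)$-stage game starting at state $s$ in which a player's payoff is $(1-\delta)\sum_{k=1}^{n-1}\delta^{k-1}u_i(a^k,s^k)+\delta^{n-1}w(h^n)$; an SSE of it is a strongly symmetric public-strategy equilibrium. *)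

theory Defs
  imports "HOL-Analysis.Analysis" "HOL-Combinatorics.Permutations" "HOL-Library.Extended_Real"
begin

(* Players: finite type 'i; states: finite type 's; actions: finite type 'b;
   public signals: finite type 'y.
   u i a s : payoff of player i at state s under pure action profile a :: 'i => 'b.
   p s a t y : probability of next state t and signal y at state s under profile a. *)

definition mixed_actions :: "('b::finite \<Rightarrow> real) set" where
  "mixed_actions = {\<alpha>. (\<forall>b. 0 \<le> \<alpha> b) \<and> sum \<alpha> UNIV = 1}"

definition prof_prob :: "('i::finite \<Rightarrow> 'b::finite \<Rightarrow> real) \<Rightarrow> ('i \<Rightarrow> 'b) \<Rightarrow> real" where
  "prof_prob \<alpha>s a = (\<Prod>j\<in>UNIV. \<alpha>s j (a j))"

definition sym_prof :: "('b \<Rightarrow> real) \<Rightarrow> 'i \<Rightarrow> 'b \<Rightarrow> real" where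
  "sym_prof \<alpha> = (\<lambda>_. \<alpha>)"

definition dev_prof :: "'i \<Rightarrow> 'b \<Rightarrow> ('b \<Rightarrow> real) \<Rightarrow> 'i \<Rightarrow> 'b \<Rightarrow> real" where
  "dev_prof i b \<alpha> = (\<lambda>j. if j = i then (\<lambda>c. if c = b then 1 else 0) else \<alpha>)"

definition exp_u :: "('i::finite \<Rightarrow> ('i \<Rightarrow> 'b::finite) \<Rightarrow> 's \<Rightarrow> real) \<Rightarrow> 'i \<Rightarrow> ('i \<Rightarrow> 'b \<Rightarrow> real) \<Rightarrow> 's \<Rightarrow> real" where
  "exp_u u i \<alpha>s s = (\<Sum>a\<in>UNIV. prof_prob \<alpha>s a * u i a s)"

definition exp_p :: "('s \<Rightarrow> ('i::finite \<Rightarrow> 'b::finite) \<Rightarrow> 's \<Rightarrow> 'y \<Rightarrow> real) \<Rightarrow> 's \<Rightarrow> ('i \<Rightarrow> 'b \<Rightarrow> real) \<Rightarrow> 's \<Rightarrow> 'y \<Rightarrow> real" where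
  "exp_p p s \<alpha>s t y = (\<Sum>a\<in>UNIV. prof_prob \<alpha>s a * p s a t y)"

definition sym_stoch_game :: "('i::finite \<Rightarrow> ('i \<Rightarrow> 'b::finite) \<Rightarrow> 's::finite \<Rightarrow> real)
    \<Rightarrow> ('s \<Rightarrow> ('i \<Rightarrow> 'b) \<Rightarrow> 's \<Rightarrow> 'y::finite \<Rightarrow> real) \<Rightarrow> bool" where
  "sym_stoch_game u p \<longleftrightarrow>
     (\<forall>s a t y. 0 \<le> p s a t y) \<and>
     (\<forall>s a. (\<Sum>(t, y)\<in>UNIV. p s a t y) = 1) \<and>
     (\<forall>\<pi>. bij \<pi> \<longrightarrow>
        (\<forall>s a t y. p s (a \<circ> \<pi>) t y = p s a t y) \<and>
        (\<forall>i a s. u (inv \<pi> i) (a \<circ> \<pi>) s = u i a s))"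

text \<open>Feasibility in the program P_SS(lambda; Pi). Constraint (a) is imposed for every player i
  (under symmetry u_i(alpha,...,alpha,s) does not depend on i).\<close>
definition PSS_feasible :: "('i::finite \<Rightarrow> ('i \<Rightarrow> 'b::finite) \<Rightarrow> 's::finite \<Rightarrow> real)
    \<Rightarrow> ('s \<Rightarrow> ('i \<Rightarrow> 'b) \<Rightarrow> 's \<Rightarrow> 'y::finite \<Rightarrow> real) \<Rightarrow> real
    \<Rightarrow> real \<Rightarrow> ('s \<Rightarrow> 'b \<Rightarrow> real) \<Rightarrow> ('s \<Rightarrow> 's \<Rightarrow> 'y \<Rightarrow> real) \<Rightarrow> bool" where
  "PSS_feasible u p lam v \<alpha> x \<longleftrightarrow>
     (\<forall>s. \<alpha> s \<in> mixed_actions) \<and>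
     (\<forall>s i. v = exp_u u i (sym_prof (\<alpha> s)) s
                + (\<Sum>(t, y)\<in>UNIV. x s t y * exp_p p s (sym_prof (\<alpha> s)) t y)) \<and>
     (\<forall>s i b. v \<ge> exp_u u i (dev_prof i b (\<alpha> s)) s
                + (\<Sum>(t, y)\<in>UNIV. x s t y * exp_p p s (dev_prof i b (\<alpha> s)) t y)) \<and>
     (\<forall>T \<xi> (\<psi> :: 's \<Rightarrow> 'y). \<xi> permutes T \<longrightarrow> lam * (\<Sum>s\<in>T. x s (\<xi> s) (\<psi> s)) \<le> 0)"

definition kSS :: "('i::finite \<Rightarrow> ('i \<Rightarrow> 'b::finite) \<Rightarrow> 's::finite \<Rightarrow> real)
    \<Rightarrow> ('s \<Rightarrow> ('i \<Rightarrow> 'b) \<Rightarrow> 's \<Rightarrow> 'y::finite \<Rightarrow> real) \<Rightarrow> real \<Rightarrow> ereal" where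
  "kSS u p lam = (SUP vax \<in> {(v, \<alpha>, x). PSS_feasible u p lam v \<alpha> x}. ereal (lam * fst vax))"

text \<open>Public histories: ([(s^1,y^1),...,(s^{k-1},y^{k-1})], s^k); length k = length of list + 1.\<close>
type_synonym ('s, 'y) hist = "('s \<times> 'y) list \<times> 's"

text \<open>Normalized continuation payoff of player i when all use public strategy sigma,
  with m stages remaining and terminal payoff w.\<close>
fun eq_val :: "('i::finite \<Rightarrow> ('i \<Rightarrow> 'b::finite) \<Rightarrow> 's::finite \<Rightarrow> real)
    \<Rightarrow> ('s \<Rightarrow> ('i \<Rightarrow> 'b) \<Rightarrow> 's \<Rightarrow> 'y::finite \<Rightarrow> real) \<Rightarrow> real
    \<Rightarrow> (('s, 'y) hist \<Rightarrow> real) \<Rightarrow> (('s, 'y) hist \<Rightarrow> 'b \<Rightarrow> real) \<Rightarrow> 'i \<Rightarrow> nat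
    \<Rightarrow> ('s, 'y) hist \<Rightarrow> real" where
  "eq_val u p \<delta> w \<sigma> i 0 h = w h"
| "eq_val u p \<delta> w \<sigma> i (Suc m) (l, s) =
     (1 - \<delta>) * exp_u u i (sym_prof (\<sigma> (l, s))) s
     + \<delta> * (\<Sum>(t, y)\<in>UNIV. exp_p p s (sym_prof (\<sigma> (l, s))) t y
                           * eq_val u p \<delta> w \<sigma> i m (l @ [(s, y)], t))"

text \<open>Continuation payoff of player i using an arbitrary behaviour strategy tau
  (depending on the public history and on own past actions), the others using sigma.\<close>
fun dev_val :: "('i::finite \<Rightarrow> ('i \<Rightarrow> 'b::finite) \<Rightarrow> 's::finite \<Rightarrow> real)
    \<Rightarrow> ('s \<Rightarrow> ('i \<Rightarrow> 'b) \<Rightarrow> 's \<Rightarrow> 'y::finite \<Rightarrow> real) \<Rightarrow> real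
    \<Rightarrow> (('s, 'y) hist \<Rightarrow> real) \<Rightarrow> (('s, 'y) hist \<Rightarrow> 'b \<Rightarrow> real) \<Rightarrow> 'i
    \<Rightarrow> (('s, 'y) hist \<Rightarrow> 'b list \<Rightarrow> 'b \<Rightarrow> real) \<Rightarrow> nat
    \<Rightarrow> ('s, 'y) hist \<Rightarrow> 'b list \<Rightarrow> real" where
  "dev_val u p \<delta> w \<sigma> i \<tau> 0 h acts = w h"
| "dev_val u p \<delta> w \<sigma> i \<tau> (Suc m) (l, s) acts =
     (\<Sum>b\<in>UNIV. \<tau> (l, s) acts b *
        ((1 - \<delta>) * exp_u u i (dev_prof i b (\<sigma> (l, s))) s
         + \<delta> * (\<Sum>(t, y)\<in>UNIV. exp_p p s (dev_prof i b (\<sigma> (l, s))) t y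
                   * dev_val u p \<delta> w \<sigma> i \<tau> m (l @ [(s, y)], t) (acts @ [b]))))"

definition starts_at :: "'s \<Rightarrow> ('s, 'y) hist \<Rightarrow> bool" where
  "starts_at s h = (case fst h of [] \<Rightarrow> snd h = s | (s1, _) # _ \<Rightarrow> s1 = s)"

definition is_SSE :: "('i::finite \<Rightarrow> ('i \<Rightarrow> 'b::finite) \<Rightarrow> 's::finite \<Rightarrow> real)
    \<Rightarrow> ('s \<Rightarrow> ('i \<Rightarrow> 'b) \<Rightarrow> 's \<Rightarrow> 'y::finite \<Rightarrow> real) \<Rightarrow> nat \<Rightarrow> 's
    \<Rightarrow> (('s, 'y) hist \<Rightarrow> real) \<Rightarrow> real \<Rightarrow> (('s, 'y) hist \<Rightarrow> 'b \<Rightarrow> real) \<Rightarrow> bool" where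
  "is_SSE u p n s w \<delta> \<sigma> \<longleftrightarrow>
     (\<forall>h. \<sigma> h \<in> mixed_actions) \<and>
     (\<forall>h i \<tau> acts. starts_at s h \<and> length (fst h) < n \<and> (\<forall>h' acts'. \<tau> h' acts' \<in> mixed_actions) \<longrightarrow>
        dev_val u p \<delta> w \<sigma> i \<tau> (n - 1 - length (fst h)) h acts
          \<le> eq_val u p \<delta> w \<sigma> i (n - 1 - length (fst h)) h)"

definition SSE_payoff :: "('i::finite \<Rightarrow> ('i \<Rightarrow> 'b::finite) \<Rightarrow> 's::finite \<Rightarrow> real)
    \<Rightarrow> ('s \<Rightarrow> ('i \<Rightarrow> 'b) \<Rightarrow> 's \<Rightarrow> 'y::finite \<Rightarrow> real) \<Rightarrow> nat \<Rightarrow> 's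
    \<Rightarrow> (('s, 'y) hist \<Rightarrow> real) \<Rightarrow> real \<Rightarrow> real \<Rightarrow> bool" where
  "SSE_payoff u p n s w \<delta> z \<longleftrightarrow>
     (\<exists>\<sigma>. is_SSE u p n s w \<delta> \<sigma> \<and> (\<forall>i. eq_val u p \<delta> w \<sigma> i (n - 1) ([], s) = z))"

end

theory Submission
  imports Defs "HOL-Combinatorics.Cycles"
begin

text \<open>All players play \<alpha>_s at state s, and a
  promised continuation value is carried along the history by promise keeping: from value W at
  state s, after the signal y and the next state t it becomes (W - (1-\<delta>) v)/\<delta> + (1-\<delta>)/\<delta> x_s(t,y).
  Constraint (a) makes W the value of this profile at every history and constraint (b) makes
  every deviation unprofitable, so z is an SSE payoff once the promised values at length n are
  used as terminal payoffs w.
  Unrolling the recursion gives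
  \<delta>^(n-1) (w(h) - v) = (z - v) + (1-\<delta>) \<Sum>_k \<delta>^(k-1) x_(s^k)(s^(k+1), y^k).
  Constraint (c) says that \<lambda> x sums to at most 0 around every cycle of states; cutting the
  cycles out of a path leaves at most |S| steps, so every prefix sum of \<lambda> x along the history is
  at most \<kappa>0 |S|, and by Abel summation so is the discounted sum. Since \<lambda> (v - z) > \<epsilon>0, the
  choice of n and \<delta> makes \<lambda> (w(h) - z) negative.\<close>

lemma prof_prob_sum_eq_1:
  fixes \<alpha>s :: "'i::finite \<Rightarrow> 'b::finite \<Rightarrow> real"
  assumes "\<forall>j. \<alpha>s j \<in> mixed_actions"
  shows "(\<Sum>a\<in>UNIV. prof_prob \<alpha>s a) = 1"
proof -
  have "(\<Sum>a\<in>UNIV. prof_prob \<alpha>s a) = (\<Sum>g\<in>PiE UNIV (\<lambda>_. UNIV). \<Prod>j\<in>UNIV. \<alpha>s j (g j))"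
    by (simp add: prof_prob_def PiE_UNIV_domain)
  also have "\<dots> = (\<Prod>j\<in>UNIV. \<Sum>b\<in>UNIV. \<alpha>s j b)"
    by (rule prod_sum_PiE[symmetric]) auto
  also have "\<dots> = 1" using assms by (simp add: mixed_actions_def)
  finally show ?thesis .
qed

lemma prof_prob_nonneg: "\<forall>j. \<alpha>s j \<in> mixed_actions \<Longrightarrow> 0 \<le> prof_prob \<alpha>s a"
  unfolding prof_prob_def mixed_actions_def by (auto intro: prod_nonneg)

lemma sym_prof_mixed: "\<alpha> \<in> mixed_actions \<Longrightarrow> \<forall>j. sym_prof \<alpha> j \<in> mixed_actions"
  by (simp add: sym_prof_def)

lemma dev_prof_mixed: "\<alpha> \<in> mixed_actions \<Longrightarrow> \<forall>j. dev_prof i b \<alpha> j \<in> mixed_actions"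
  by (auto simp: dev_prof_def mixed_actions_def)

lemma exp_p_nonneg:
  assumes "sym_stoch_game u p" "\<forall>j. \<alpha>s j \<in> mixed_actions"
  shows "0 \<le> exp_p p s \<alpha>s t y"
  using assms unfolding exp_p_def sym_stoch_game_def
  by (auto intro!: sum_nonneg mult_nonneg_nonneg prof_prob_nonneg)

lemma exp_p_sum_eq_1:
  assumes "sym_stoch_game u p" "\<forall>j. \<alpha>s j \<in> mixed_actions"
  shows "(\<Sum>(t, y)\<in>UNIV. exp_p p s \<alpha>s t y) = 1"
proof -
  have "(\<Sum>(t, y)\<in>UNIV. exp_p p s \<alpha>s t y) = (\<Sum>a\<in>UNIV. \<Sum>(t, y)\<in>UNIV. prof_prob \<alpha>s a * p s a t y)"
    unfolding exp_p_def split_def by (rule sum.swap)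
  also have "\<dots> = (\<Sum>a\<in>UNIV. prof_prob \<alpha>s a * (\<Sum>(t, y)\<in>UNIV. p s a t y))"
    by (simp add: sum_distrib_left split_def)
  also have "\<dots> = 1"
    using assms prof_prob_sum_eq_1 unfolding sym_stoch_game_def by simp
  finally show ?thesis .
qed

text \<open>A walk is a list of (state, signal) steps followed by a final state; the target of each
  step is the state of the next step.\<close>

fun walk_start :: "('s \<times> 'y) list \<Rightarrow> 's \<Rightarrow> 's" where
  "walk_start [] t = t"
| "walk_start (e # _) t = fst e"

fun walk_sum :: "('s \<Rightarrow> 's \<Rightarrow> 'y \<Rightarrow> real) \<Rightarrow> real \<Rightarrow> ('s \<times> 'y) list \<Rightarrow> 's \<Rightarrow> real" where
  "walk_sum g d [] t = 0"
| "walk_sum g d (e # r) t = g (fst e) (walk_start r t) (snd e) + d * walk_sum g d r t"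

lemma walk_start_append: "walk_start (A @ B) t = walk_start A (walk_start B t)"
  by (cases A) auto

lemma walk_sum_append: "walk_sum g 1 (A @ B) t = walk_sum g 1 A (walk_start B t) + walk_sum g 1 B t"
  by (induction A) (auto simp: walk_start_append)

lemma walk_sum_scale: "walk_sum (\<lambda>s t y. c * g s t y) d l t = c * walk_sum g d l t"
  by (induction l) (auto simp: algebra_simps)

lemma walk_sum_le_length: "\<forall>s t y. g s t y \<le> K \<Longrightarrow> walk_sum g 1 l t \<le> real (length l) * K"
proof (induction l)
  case (Cons e r)
  have "walk_sum g 1 (e # r) t = g (fst e) (walk_start r t) (snd e) + walk_sum g 1 r t" by simp
  also have "\<dots> \<le> K + real (length r) * K" using Cons by (intro add_mono) auto
  finally show ?case by (simp add: algebra_simps)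
qed simp

text \<open>Abel summation: a discounted sum is a convex combination of the undiscounted prefix sums.\<close>
lemma walk_sum_discounted_le:
  assumes "0 \<le> d" "d \<le> 1"
    and "\<forall>k\<le>length l. walk_sum g 1 (take k l) (walk_start (drop k l) t) \<le> B"
  shows "walk_sum g d l t \<le> B"
  using assms(3)
proof (induction l arbitrary: B)
  case Nil
  then show ?case by auto
next
  case (Cons e r)
  define a where "a = g (fst e) (walk_start r t) (snd e)"
  have "walk_sum g 1 (take 1 (e # r)) (walk_start (drop 1 (e # r)) t) \<le> B"
    using Cons.prems by fastforce
  hence aB: "a \<le> B" by (simp add: a_def)
  have "walk_sum g 1 (take k r) (walk_start (drop k r) t) \<le> B - a" if "k \<le> length r" for k
  proof -
    have "walk_sum g 1 (take (Suc k) (e # r)) (walk_start (drop (Suc k) (e # r)) t) \<le> B"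
      using Cons.prems that by auto
    moreover have "walk_start (take k r) (walk_start (drop k r) t) = walk_start r t"
      using walk_start_append[of "take k r" "drop k r" t] by simp
    ultimately show ?thesis by (simp add: a_def)
  qed
  hence "walk_sum g d r t \<le> B - a" using Cons.IH by blast
  hence "walk_sum g d (e # r) t \<le> a + d * (B - a)"
    using assms(1) by (simp add: a_def mult_left_mono)
  also have "\<dots> \<le> B"
    using mult_left_mono[OF aB, of "1 - d"] assms(2) by (simp add: algebra_simps)
  finally show ?case .
qed

lemma not_distinct_map_decomp:
  "\<not> distinct (map f ws) \<Longrightarrow>
    \<exists>A e1 B e2 D. ws = A @ e1 # B @ e2 # D \<and> f e1 = f e2 \<and> distinct (map f (e1 # B))"
proof (induction ws)
  case Nil
  then show ?case by simp
next
  case (Cons w ws)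
  show ?case
  proof (cases "distinct (map f ws)")
    case True
    with Cons.prems have "\<exists>e\<in>set ws. f e = f w" by auto
    then obtain B e2 D where ws: "ws = B @ e2 # D" and "f e2 = f w" and "\<forall>e\<in>set B. f e \<noteq> f w"
      by (rule split_list_first_propE)
    with True have "w # ws = [] @ w # B @ e2 # D" "distinct (map f (w # B))" "f w = f e2" by auto
    then show ?thesis by blast
  next
    case False
    then obtain A e1 B e2 D where "ws = A @ e1 # B @ e2 # D" "f e1 = f e2" "distinct (map f (e1 # B))"
      using Cons.IH by blast
    then show ?thesis by (intro exI[of _ "w # A"]) auto
  qed
qed

lemma walk_sum_as_sum_list:
  "walk_sum g 1 C t = sum_list (map (\<lambda>(e, t'). g (fst e) t' (snd e)) (zip C (map fst (tl C) @ [t])))"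
proof (induction C)
  case (Cons e r)
  then show ?case by (cases r) auto
qed simp

text \<open>A closed walk through distinct states is a cyclic permutation \<xi> of these states together
  with a choice \<psi> of signals.\<close>
lemma cycle_walk_sum_nonpos:
  assumes cyc: "\<forall>T \<xi> (\<psi> :: 's \<Rightarrow> 'y). \<xi> permutes T \<longrightarrow> (\<Sum>s\<in>T. g s (\<xi> s) (\<psi> s)) \<le> 0"
    and dist: "distinct (map fst C)" and "C \<noteq> []"
  shows "walk_sum g 1 C (fst (hd C)) \<le> 0"
proof -
  define cs where "cs = map fst C"
  define \<xi> where "\<xi> = cycle_of_list cs"
  define \<psi> where "\<psi> = (\<lambda>s. the (map_of C s))"
  have dcs: "distinct cs" using dist by (simp add: cs_def)
  have "map fst (tl C) @ [fst (hd C)] = rotate1 cs"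
    using \<open>C \<noteq> []\<close> by (cases C) (simp_all add: cs_def)
  also have "\<dots> = map (\<xi> \<circ> fst) C"
    using cyclic_rotation[OF dcs, of 1] by (simp add: \<xi>_def cs_def)
  finally have "walk_sum g 1 C (fst (hd C)) = sum_list (map (\<lambda>e. g (fst e) (\<xi> (fst e)) (snd e)) C)"
    unfolding walk_sum_as_sum_list by (simp add: zip_map2 zip_same_conv_map o_def)
  also have "\<dots> = sum_list (map (\<lambda>e. g (fst e) (\<xi> (fst e)) (\<psi> (fst e))) C)"
    using dist by (intro arg_cong[where f = sum_list] map_cong) (auto simp: \<psi>_def map_of_is_SomeI)
  also have "\<dots> = sum_list (map (\<lambda>s. g s (\<xi> s) (\<psi> s)) cs)"
    by (simp add: cs_def o_def)
  also have "\<dots> = (\<Sum>s\<in>set cs. g s (\<xi> s) (\<psi> s))"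
    using dcs by (rule sum_list_distinct_conv_sum_set)
  also have "\<dots> \<le> 0" using cyc cycle_permutes[of cs] by (simp add: \<xi>_def)
  finally show ?thesis .
qed

lemma walk_sum_le_card:
  fixes g :: "'s::finite \<Rightarrow> 's \<Rightarrow> 'y \<Rightarrow> real"
  assumes cyc: "\<forall>T \<xi> (\<psi> :: 's \<Rightarrow> 'y). \<xi> permutes T \<longrightarrow> (\<Sum>s\<in>T. g s (\<xi> s) (\<psi> s)) \<le> 0"
    and bnd: "\<forall>s t y. g s t y \<le> K" and K: "0 \<le> K"
  shows "walk_sum g 1 l t \<le> K * real CARD('s)"
proof (induction l rule: length_induct)
  case (1 l)
  show ?case
  proof (cases "distinct (map fst l)")
    case True
    have "length l = card (set (map fst l))" using distinct_card[OF True] by simp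
    also have "\<dots> \<le> CARD('s)" by (rule card_mono) auto
    finally have "real (length l) * K \<le> real CARD('s) * K" using K by (intro mult_right_mono) auto
    then show ?thesis using walk_sum_le_length[OF bnd, of l t] by (simp add: mult.commute)
  next
    case False
    then obtain A e1 B e2 D where l: "l = A @ e1 # B @ e2 # D" and fe: "fst e1 = fst e2"
      and dist: "distinct (map fst (e1 # B))"
      using not_distinct_map_decomp by blast
    have "walk_sum g 1 l t
        = walk_sum g 1 A (fst e2) + walk_sum g 1 (e1 # B) (fst e1) + walk_sum g 1 (e2 # D) t"
      unfolding l using walk_sum_append[of g A "e1 # B @ e2 # D" t]
        walk_sum_append[of g "e1 # B" "e2 # D" t] fe by simp
    also have "\<dots> \<le> walk_sum g 1 (A @ e2 # D) t"
      using cycle_walk_sum_nonpos[OF cyc dist] walk_sum_append[of g A "e2 # D" t] by simp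
    also have "\<dots> \<le> K * real CARD('s)"
      using "1.IH" l by auto
    finally show ?thesis .
  qed
qed

fun promised_value :: "real \<Rightarrow> real \<Rightarrow> ('s \<Rightarrow> 's \<Rightarrow> 'y \<Rightarrow> real) \<Rightarrow> real \<Rightarrow> ('s \<times> 'y) list \<Rightarrow> 's \<Rightarrow> real" where
  "promised_value d v x z [] t = z"
| "promised_value d v x z (e # r) t =
     promised_value d v x ((z - (1 - d) * v) / d + (1 - d) / d * x (fst e) (walk_start r t) (snd e)) r t"

lemma promised_value_snoc:
  "promised_value d v x z (l @ [(s, y)]) t
     = (promised_value d v x z l s - (1 - d) * v) / d + (1 - d) / d * x s t y"
proof (induction l arbitrary: z)
  case (Cons e r)
  have "walk_start (r @ [(s, y)]) t = walk_start r s" by (cases r) auto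
  then show ?case using Cons by simp
qed simp

lemma promised_value_closed_form:
  assumes "d \<noteq> 0"
  shows "d ^ length l * (promised_value d v x z l t - v) = (z - v) + (1 - d) * walk_sum x d l t"
proof (induction l arbitrary: z)
  case (Cons e r)
  define z' where "z' = (z - (1 - d) * v) / d + (1 - d) / d * x (fst e) (walk_start r t) (snd e)"
  have "d ^ length (e # r) * (promised_value d v x z (e # r) t - v)
      = d * (d ^ length r * (promised_value d v x z' r t - v))"
    by (simp add: z'_def)
  also have "\<dots> = d * ((z' - v) + (1 - d) * walk_sum x d r t)" using Cons by simp
  also have "\<dots> = (z - v) + (1 - d) * walk_sum x d (e # r) t"
    using assms by (simp add: z'_def field_simps)
  finally show ?case .
qed simp

text \<open>The accounting behind promise keeping: paying (1-\<delta>) U today and the updated promises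
  tomorrow delivers W, up to (1-\<delta>) times the slack of the constraint v \<ge> U + E[x].\<close>
lemma promise_keeping_identity:
  fixes P x :: "'a \<Rightarrow> 'b \<Rightarrow> real"
  assumes "(\<Sum>(t, y)\<in>A. P t y) = 1" "d \<noteq> 0"
  shows "(1 - d) * U + d * (\<Sum>(t, y)\<in>A. P t y * ((W - (1 - d) * v) / d + (1 - d) / d * x t y))
         = W + (1 - d) * (U + (\<Sum>(t, y)\<in>A. x t y * P t y) - v)"
proof -
  have lin: "(\<Sum>(t, y)\<in>A. P t y * (c + k * x t y))
      = c * (\<Sum>(t, y)\<in>A. P t y) + k * (\<Sum>(t, y)\<in>A. x t y * P t y)" for c k
  proof -
    have "(\<Sum>(t, y)\<in>A. P t y * (c + k * x t y)) = (\<Sum>(t, y)\<in>A. c * P t y + k * (x t y * P t y))"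
      by (rule sum.cong) (auto simp: algebra_simps)
    then show ?thesis unfolding split_def by (simp add: sum.distrib sum_distrib_left)
  qed
  have "(1 - d) * U + d * (\<Sum>(t, y)\<in>A. P t y * ((W - (1 - d) * v) / d + (1 - d) / d * x t y))
      = (1 - d) * U + d * ((W - (1 - d) * v) / d + (1 - d) / d * (\<Sum>(t, y)\<in>A. x t y * P t y))"
    unfolding lin assms(1) by simp
  also have "\<dots> = W + (1 - d) * (U + (\<Sum>(t, y)\<in>A. x t y * P t y) - v)"
    using assms(2) by (simp add: field_simps)
  finally show ?thesis .
qed

context
  fixes u :: "'i::finite \<Rightarrow> ('i \<Rightarrow> 'b::finite) \<Rightarrow> 's::finite \<Rightarrow> real"
    and p :: "'s \<Rightarrow> ('i \<Rightarrow> 'b) \<Rightarrow> 's \<Rightarrow> 'y::finite \<Rightarrow> real"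
    and lam v :: real and \<alpha> :: "'s \<Rightarrow> 'b \<Rightarrow> real" and x :: "'s \<Rightarrow> 's \<Rightarrow> 'y \<Rightarrow> real"
  assumes game: "sym_stoch_game u p" and feas: "PSS_feasible u p lam v \<alpha> x"
begin

lemma eq_val_promised_value:
  assumes "0 < \<delta>"
  shows "eq_val u p \<delta> (\<lambda>h. promised_value \<delta> v x z (fst h) (snd h)) (\<lambda>h. \<alpha> (snd h)) i m (l, s)
         = promised_value \<delta> v x z l s"
proof (induction m arbitrary: l s)
  case (Suc m)
  define P where "P = exp_p p s (sym_prof (\<alpha> s))"
  have "\<alpha> s \<in> mixed_actions" using feas by (simp add: PSS_feasible_def)
  hence "\<forall>j. sym_prof (\<alpha> s) j \<in> mixed_actions" by (rule sym_prof_mixed)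
  hence "(\<Sum>(t, y)\<in>UNIV. P t y) = 1" unfolding P_def by (rule exp_p_sum_eq_1[OF game])
  moreover have "exp_u u i (sym_prof (\<alpha> s)) s + (\<Sum>(t, y)\<in>UNIV. x s t y * P t y) = v"
    using feas unfolding PSS_feasible_def P_def by metis
  ultimately show ?case
    using promise_keeping_identity[of P UNIV \<delta> "exp_u u i (sym_prof (\<alpha> s)) s"
        "promised_value \<delta> v x z l s" v "x s"] assms
    by (simp add: Suc.IH promised_value_snoc P_def)
qed simp

lemma stage_deviation_le_promised_value:
  assumes d: "0 < \<delta>" "\<delta> \<le> 1"
    and cont: "\<forall>t y. C t y \<le> promised_value \<delta> v x z (l @ [(s, y)]) t"
  shows "(1 - \<delta>) * exp_u u i (dev_prof i b (\<alpha> s)) s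
           + \<delta> * (\<Sum>(t, y)\<in>UNIV. exp_p p s (dev_prof i b (\<alpha> s)) t y * C t y)
         \<le> promised_value \<delta> v x z l s"
proof -
  define V where "V = promised_value \<delta> v x z l s"
  define U where "U = exp_u u i (dev_prof i b (\<alpha> s)) s"
  define P where "P = exp_p p s (dev_prof i b (\<alpha> s))"
  have "\<alpha> s \<in> mixed_actions" using feas by (simp add: PSS_feasible_def)
  hence mix: "\<forall>j. dev_prof i b (\<alpha> s) j \<in> mixed_actions" by (rule dev_prof_mixed)
  have P1: "(\<Sum>(t, y)\<in>UNIV. P t y) = 1" unfolding P_def by (rule exp_p_sum_eq_1[OF game mix])
  have IC: "U + (\<Sum>(t, y)\<in>UNIV. x s t y * P t y) \<le> v"
    using feas unfolding PSS_feasible_def U_def P_def by metis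
  have "P t y * C t y \<le> P t y * ((V - (1 - \<delta>) * v) / \<delta> + (1 - \<delta>) / \<delta> * x s t y)" for t y
    using cont exp_p_nonneg[OF game mix] by (intro mult_left_mono) (simp_all add: V_def P_def promised_value_snoc)
  hence "(\<Sum>(t, y)\<in>UNIV. P t y * C t y)
      \<le> (\<Sum>(t, y)\<in>UNIV. P t y * ((V - (1 - \<delta>) * v) / \<delta> + (1 - \<delta>) / \<delta> * x s t y))"
    by (auto intro: sum_mono)
  hence "(1 - \<delta>) * U + \<delta> * (\<Sum>(t, y)\<in>UNIV. P t y * C t y)
      \<le> (1 - \<delta>) * U + \<delta> * (\<Sum>(t, y)\<in>UNIV. P t y * ((V - (1 - \<delta>) * v) / \<delta> + (1 - \<delta>) / \<delta> * x s t y))"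
    using d by (intro add_left_mono mult_left_mono) auto
  also have "\<dots> = V + (1 - \<delta>) * (U + (\<Sum>(t, y)\<in>UNIV. x s t y * P t y) - v)"
    using d by (intro promise_keeping_identity[OF P1]) simp
  also have "\<dots> \<le> V" using IC d by (simp add: mult_nonneg_nonpos)
  finally show ?thesis by (simp add: U_def P_def V_def)
qed

lemma dev_val_le_promised_value:
  assumes d: "0 < \<delta>" "\<delta> \<le> 1" and tau: "\<forall>h acts. \<tau> h acts \<in> mixed_actions"
  shows "dev_val u p \<delta> (\<lambda>h. promised_value \<delta> v x z (fst h) (snd h)) (\<lambda>h. \<alpha> (snd h)) i \<tau> m (l, s) acts
         \<le> promised_value \<delta> v x z l s"
proof (induction m arbitrary: l s acts)
  case (Suc m)
  define W where "W = (\<lambda>h. promised_value \<delta> v x z (fst h) (snd h))"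
  define V where "V = promised_value \<delta> v x z l s"
  define stage where "stage b = (1 - \<delta>) * exp_u u i (dev_prof i b (\<alpha> s)) s
      + \<delta> * (\<Sum>(t, y)\<in>UNIV. exp_p p s (dev_prof i b (\<alpha> s)) t y
               * dev_val u p \<delta> W (\<lambda>h. \<alpha> (snd h)) i \<tau> m (l @ [(s, y)], t) (acts @ [b]))" for b
  have "stage b \<le> V" for b
    unfolding stage_def V_def
    by (rule stage_deviation_le_promised_value[OF d]) (use Suc.IH in \<open>simp add: W_def\<close>)
  moreover have tm: "\<tau> (l, s) acts \<in> mixed_actions" using tau by blast
  ultimately have "(\<Sum>b\<in>UNIV. \<tau> (l, s) acts b * stage b) \<le> (\<Sum>b\<in>UNIV. \<tau> (l, s) acts b * V)"
    by (intro sum_mono mult_left_mono) (auto simp: mixed_actions_def)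
  also have "\<dots> = V" using tm by (simp add: sum_distrib_right[symmetric] mixed_actions_def)
  finally show ?case by (simp only: dev_val.simps stage_def W_def V_def snd_conv fst_conv)
qed simp

lemma promise_keeping_SSE_payoff:
  assumes "0 < \<delta>" "\<delta> \<le> 1"
  shows "SSE_payoff u p n s (\<lambda>h. promised_value \<delta> v x z (fst h) (snd h)) \<delta> z"
proof -
  define w where "w = (\<lambda>h. promised_value \<delta> v x z (fst h) (snd h))"
  define \<sigma> where "\<sigma> = (\<lambda>h :: ('s, 'y) hist. \<alpha> (snd h))"
  have eq: "eq_val u p \<delta> w \<sigma> i k h = w h" for i k h
    using eq_val_promised_value[OF assms(1), of z i k "fst h" "snd h"] by (simp add: w_def \<sigma>_def)
  have "is_SSE u p n s w \<delta> \<sigma>"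
    unfolding is_SSE_def
  proof (intro conjI allI impI)
    show "\<sigma> h \<in> mixed_actions" for h using feas by (simp add: \<sigma>_def PSS_feasible_def)
  next
    fix h :: "('s, 'y) hist" and i :: 'i and \<tau> :: "('s, 'y) hist \<Rightarrow> 'b list \<Rightarrow> 'b \<Rightarrow> real"
      and acts :: "'b list"
    assume "starts_at s h \<and> length (fst h) < n \<and> (\<forall>h' acts'. \<tau> h' acts' \<in> mixed_actions)"
    then show "dev_val u p \<delta> w \<sigma> i \<tau> (n - 1 - length (fst h)) h acts
        \<le> eq_val u p \<delta> w \<sigma> i (n - 1 - length (fst h)) h"
      using dev_val_le_promised_value[OF assms, of \<tau> z i _ "fst h" "snd h" acts]
      unfolding eq by (simp add: w_def \<sigma>_def)
  qed
  moreover have "\<forall>i. eq_val u p \<delta> w \<sigma> i (n - 1) ([], s) = z" unfolding eq by (simp add: w_def)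
  ultimately show ?thesis unfolding SSE_payoff_def w_def by blast
qed

end

lemma promised_value_below_target:
  fixes X :: "'s::finite \<Rightarrow> 's \<Rightarrow> 'y \<Rightarrow> real"
  assumes cyc: "\<forall>T \<xi> (\<psi> :: 's \<Rightarrow> 'y). \<xi> permutes T \<longrightarrow> lam * (\<Sum>s\<in>T. X s (\<xi> s) (\<psi> s)) \<le> 0"
    and bnd: "\<forall>s t y. lam * X s t y \<le> K" and K: "0 \<le> K"
    and d: "0 < \<delta>" "\<delta> < 1"
    and gap: "(1 - \<delta>) * (K * real CARD('s)) < (1 - \<delta> ^ length l) * (lam * (V - z))"
  shows "lam * promised_value \<delta> V X z l t < lam * z"
proof -
  define G where "G = (\<lambda>s t y. lam * X s t y)"
  have "\<forall>T \<xi> (\<psi> :: 's \<Rightarrow> 'y). \<xi> permutes T \<longrightarrow> (\<Sum>s\<in>T. G s (\<xi> s) (\<psi> s)) \<le> 0"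
    using cyc by (simp add: G_def sum_distrib_left)
  moreover have "\<forall>s t y. G s t y \<le> K" using bnd by (simp add: G_def)
  ultimately have "walk_sum G 1 l' t' \<le> K * real CARD('s)" for l' t'
    using K by (rule walk_sum_le_card)
  hence "walk_sum G \<delta> l t \<le> K * real CARD('s)"
    using d by (intro walk_sum_discounted_le) auto
  hence "(1 - \<delta>) * (lam * walk_sum X \<delta> l t) \<le> (1 - \<delta>) * (K * real CARD('s))"
    using d by (simp add: G_def walk_sum_scale mult_left_mono)
  moreover have "\<delta> ^ length l * (lam * promised_value \<delta> V X z l t - lam * z)
      = (1 - \<delta>) * (lam * walk_sum X \<delta> l t) - (1 - \<delta> ^ length l) * (lam * (V - z))"
    using arg_cong[OF promised_value_closed_form[of \<delta> l V X z t], of "\<lambda>r. lam * r"] d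
    by (simp add: algebra_simps)
  ultimately have "\<delta> ^ length l * (lam * promised_value \<delta> V X z l t - lam * z) < 0"
    using gap by linarith
  thus ?thesis using d by (simp add: mult_less_0_iff)
qed

lemma horizon_gap:
  fixes a q c \<epsilon> D \<delta> :: real
  assumes "2 * c < \<epsilon> * a / 2" "0 \<le> c" "0 < \<epsilon>" "\<epsilon> < D" "\<delta> < 1"
    and "a * (1 - \<delta>) / 2 \<le> q"
  shows "(1 - \<delta>) * c < q * D"
proof -
  have "0 < \<epsilon> * a" using assms(1,2) by linarith
  hence "0 < a" using assms(3) by (simp add: zero_less_mult_iff)
  hence "0 < a * (1 - \<delta>) / 2" using assms(5) by simp
  hence q: "0 < q" using assms(6) by linarith
  have "(1 - \<delta>) * c < (1 - \<delta>) * (\<epsilon> * a / 2)" using assms(1,2,5) by simp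
  also have "\<dots> = \<epsilon> * (a * (1 - \<delta>) / 2)" by simp
  also have "\<dots> \<le> \<epsilon> * q" using assms(3,6) by simp
  also have "\<dots> < q * D" using q assms(4) by simp
  finally show ?thesis .
qed

lemma abs_le_Max_abs:
  fixes f :: "'l \<Rightarrow> 's::finite \<Rightarrow> 't::finite \<Rightarrow> 'y::finite \<Rightarrow> real"
  assumes "finite L" "lam \<in> L"
  shows "\<bar>f lam s t y\<bar> \<le> Max {\<bar>f lam s t y\<bar> | lam s t y. lam \<in> L}"
proof (rule Max_ge)
  have "{\<bar>f lam s t y\<bar> | lam s t y. lam \<in> L} \<subseteq> (\<lambda>(lam, s, t, y). \<bar>f lam s t y\<bar>) ` (L \<times> UNIV)"
    by (clarify, rule image_eqI[where x = "(_, _, _, _)"]) auto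
  then show "finite {\<bar>f lam s t y\<bar> | lam s t y. lam \<in> L}"
    by (rule finite_subset) (use assms(1) in simp)
qed (use assms(2) in blast)

theorem mainTheorem3:
  fixes u :: "'i::finite \<Rightarrow> ('i \<Rightarrow> 'b::finite) \<Rightarrow> 's::finite \<Rightarrow> real"
    and p :: "'s \<Rightarrow> ('i \<Rightarrow> 'b) \<Rightarrow> 's \<Rightarrow> 'y::finite \<Rightarrow> real"
    and zlo zhi \<epsilon>0 \<kappa>0 \<delta>bar :: real and n :: nat
    and v :: "real \<Rightarrow> real"
    and \<alpha> :: "real \<Rightarrow> 's \<Rightarrow> 'b \<Rightarrow> real"
    and x :: "real \<Rightarrow> 's \<Rightarrow> 's \<Rightarrow> 'y \<Rightarrow> real"
  assumes game: "sym_stoch_game u p"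
    and zlt: "zlo < zhi"
    and kminus: "- kSS u p (-1) < ereal zlo"
    and kplus: "ereal zhi < kSS u p 1"
    and eps0: "\<epsilon>0 > 0"
    and feas: "\<forall>lam\<in>{-1, 1}. PSS_feasible u p lam (v lam) (\<alpha> lam) (x lam)"
    and sep: "\<forall>z\<in>{zlo..zhi}. v (-1) + \<epsilon>0 < z \<and> z < v 1 - \<epsilon>0"
    and kappa: "\<kappa>0 = max (Max {\<bar>x lam s t y\<bar> | lam s t y. lam \<in> {-1, 1}})
                           (Sup {\<bar>z - v lam\<bar> | lam z. lam \<in> {-1, 1} \<and> z \<in> {zlo..zhi}})"
    and nbig: "\<epsilon>0 * (real n - 1) / 2 - 2 * \<kappa>0 * real CARD('s) > 0"
    and dbar: "\<delta>bar < 1"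
    and dbar_prop: "\<forall>\<delta>. \<delta>bar \<le> \<delta> \<and> 0 < \<delta> \<and> \<delta> < 1 \<longrightarrow>
                       (real n / 2)^2 * (1 - \<delta>) \<le> real CARD('s) \<and>
                       1 - \<delta>^(n - 1) \<ge> (real n - 1) * (1 - \<delta>) / 2"
  shows "\<forall>lam\<in>{-1, 1}. \<forall>z\<in>{zlo..zhi}. \<forall>\<delta>. \<delta>bar \<le> \<delta> \<and> 0 < \<delta> \<and> \<delta> < 1 \<longrightarrow>
           (\<exists>w :: ('s, 'y) hist \<Rightarrow> real.
              (\<forall>s. SSE_payoff u p n s w \<delta> z) \<and>
              (\<forall>h. length (fst h) = n - 1 \<longrightarrow> lam * w h < lam * z))"
proof (intro ballI allI impI)
  fix lam z \<delta> :: real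
  assume lam: "lam \<in> {-1, 1}" and z: "z \<in> {zlo..zhi}" and \<delta>: "\<delta>bar \<le> \<delta> \<and> 0 < \<delta> \<and> \<delta> < 1"
  have fe: "PSS_feasible u p lam (v lam) (\<alpha> lam) (x lam)" using feas lam by (rule bspec)
  have x_le: "\<bar>x lam s t y\<bar> \<le> \<kappa>0" for s t y
    unfolding kappa using abs_le_Max_abs[OF _ lam] by (intro max.coboundedI1) simp
  have bnd: "\<forall>s t y. lam * x lam s t y \<le> \<kappa>0"
  proof (intro allI)
    fix s t y
    have "lam * x lam s t y \<le> \<bar>x lam s t y\<bar>" using lam by auto
    then show "lam * x lam s t y \<le> \<kappa>0" using x_le by (rule order_trans)
  qed
  have "0 \<le> \<kappa>0" using x_le abs_ge_zero order_trans by blast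
  have "\<epsilon>0 < lam * (v lam - z)" using sep[rule_format, OF z] lam by auto
  moreover have "(real n - 1) * (1 - \<delta>) / 2 \<le> 1 - \<delta> ^ (n - 1)" using dbar_prop \<delta> by blast
  ultimately have gap: "(1 - \<delta>) * (\<kappa>0 * real CARD('s)) < (1 - \<delta> ^ (n - 1)) * (lam * (v lam - z))"
    using nbig \<open>0 \<le> \<kappa>0\<close> \<delta> by (intro horizon_gap[OF _ _ eps0]) (simp_all add: mult.assoc)
  have cyc: "\<forall>T \<xi> (\<psi> :: 's \<Rightarrow> 'y). \<xi> permutes T \<longrightarrow> lam * (\<Sum>s\<in>T. x lam s (\<xi> s) (\<psi> s)) \<le> 0"
    using fe by (simp add: PSS_feasible_def)
  define w where "w = (\<lambda>h :: ('s, 'y) hist. promised_value \<delta> (v lam) (x lam) z (fst h) (snd h))"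
  have "SSE_payoff u p n s w \<delta> z" for s
    unfolding w_def by (rule promise_keeping_SSE_payoff[OF game fe]) (use \<delta> in auto)
  moreover have "lam * w h < lam * z" if "length (fst h) = n - 1" for h
  proof -
    have "(1 - \<delta>) * (\<kappa>0 * real CARD('s)) < (1 - \<delta> ^ length (fst h)) * (lam * (v lam - z))"
      using gap that by simp
    then show ?thesis
      unfolding w_def by (rule promised_value_below_target[OF cyc bnd \<open>0 \<le> \<kappa>0\<close>, rotated 2]) (use \<delta> in auto)
  qed
  ultimately show "\<exists>w. (\<forall>s. SSE_payoff u p n s w \<delta> z) \<and>
                       (\<forall>h. length (fst h) = n - 1 \<longrightarrow> lam * w h < lam * z)"
    by blast
qed

end
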